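(* Let $T=(V,E)$ be a tree rooted at $o$ with edge lengths $\ell:E\to\mathbb{R}_{>0}$. Let $X_1,X_2,X_3,X_4\subseteq V$ and $e\in E\cup V$. Then $\mathrm{mst}_e(X_1\cup X_2)\le \mathrm{mst}_e(X_1)+\mathrm{mst}_e(X_2)$, $\mathrm{mst}_e(X_2)+\mathrm{mst}_e(X_1\cup X_2\cup X_3)\le \mathrm{mst}_e(X_1\cup X_2)+\mathrm{mst}_e(X_2\cup X_3)$, and $\mathrm{mst}_e(X_1\cup X_2\cup X_3)+\mathrm{mst}_e(X_2\cup X_3\cup X_4)\le \mathrm{mst}_e(X_1\cup X_2)+\mathrm{mst}_e(X_2\cup X_3)+\mathrm{mst}_e(X_3\cup X_4)$.
   Context: For $v\in V$, $V_v$ is the set of descendants of $v$ in $T$ (including $v$); for an edge $e=(u,v)$ with $v$ the child, $V_e=V_v$. For $X\subseteq V$, $\mathrm{mst}(X)$ is the total length of the minimal subtree of $T$ containing $X\cup\{o\}$ (so $\mathrm{mst}(\emptyset)=0$), and for $e\in E\cup V$, $\mathrm{mst}_e(X)=\mathrm{mst}(V_e\cap X)$. *)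

theory Defs
  imports Complex_Main
begin

text \<open>A finite tree rooted at r (the root o) is given by its vertex set V and a parent map par
  (convention: par o = o, written with r).\<close>

definition rooted_tree :: "'a set \<Rightarrow> 'a \<Rightarrow> ('a \<Rightarrow> 'a) \<Rightarrow> bool" where
  "rooted_tree V r par \<longleftrightarrow> finite V \<and> r \<in> V \<and> par r = r \<and>
     (\<forall>v\<in>V. par v \<in> V) \<and> (\<forall>v\<in>V. \<exists>n. (par ^^ n) v = r)"

definition tree_edges :: "'a set \<Rightarrow> 'a \<Rightarrow> ('a \<Rightarrow> 'a) \<Rightarrow> ('a \<times> 'a) set" where
  "tree_edges V r par = {(par v, v) | v. v \<in> V \<and> v \<noteq> r}"

definition desc :: "'a set \<Rightarrow> ('a \<Rightarrow> 'a) \<Rightarrow> 'a \<Rightarrow> 'a set" where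
  "desc V par v = {w \<in> V. \<exists>n. (par ^^ n) w = v}"

fun desc_el :: "'a set \<Rightarrow> ('a \<Rightarrow> 'a) \<Rightarrow> ('a \<times> 'a) + 'a \<Rightarrow> 'a set" where
  "desc_el V par (Inl (u, v)) = desc V par v"
| "desc_el V par (Inr v) = desc V par v"

definition root_path_edges :: "'a \<Rightarrow> ('a \<Rightarrow> 'a) \<Rightarrow> 'a \<Rightarrow> ('a \<times> 'a) set" where
  "root_path_edges r par x = {(par w, w) | w. w \<noteq> r \<and> (\<exists>n. (par ^^ n) x = w)}"

text \<open>Edge set of the minimal subtree containing X \<union> {r}: the union of root paths.\<close>
definition mst_edges :: "'a \<Rightarrow> ('a \<Rightarrow> 'a) \<Rightarrow> 'a set \<Rightarrow> ('a \<times> 'a) set" where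
  "mst_edges r par X = (\<Union>x\<in>X. root_path_edges r par x)"

definition mst :: "'a \<Rightarrow> ('a \<Rightarrow> 'a) \<Rightarrow> ('a \<times> 'a \<Rightarrow> real) \<Rightarrow> 'a set \<Rightarrow> real" where
  "mst r par len X = sum len (mst_edges r par X)"

definition mst_at :: "'a set \<Rightarrow> 'a \<Rightarrow> ('a \<Rightarrow> 'a) \<Rightarrow> ('a \<times> 'a \<Rightarrow> real)
    \<Rightarrow> ('a \<times> 'a) + 'a \<Rightarrow> 'a set \<Rightarrow> real" where
  "mst_at V r par len e X = mst r par len (desc_el V par e \<inter> X)"

end

theory Submission
  imports Defs
begin

text \<open>The edge set of the minimal subtree spanned by X and the root is the union of the root
  paths of the points of X, so mst is a weighted coverage function: monotone, subadditive and
  submodular.  Intersecting with the descendant set V_e commutes with unions, so mst_e inherits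
  these properties.  The first two inequalities are subadditivity and submodularity (the latter
  applied to X1 \<union> X2 and X2 \<union> X3, whose intersection contains X2); the third is the sum of
  two instances of the second, for (X1, X2, X3) and (X2, X3, X4), together with subadditivity
  for X2 \<union> X3.\<close>

lemma funpow_parent_in_tree:
  assumes "rooted_tree V r par" "x \<in> V"
  shows "(par ^^ n) x \<in> V"
  using assms by (induction n) (auto simp: rooted_tree_def)

lemma finite_tree_edges:
  assumes "rooted_tree V r par"
  shows "finite (tree_edges V r par)"
proof -
  have "tree_edges V r par = (\<lambda>v. (par v, v)) ` (V - {r})"
    unfolding tree_edges_def by blast
  then show ?thesis
    using assms by (simp add: rooted_tree_def)
qed

lemma mst_edges_subset_tree_edges:
  assumes "rooted_tree V r par" "X \<subseteq> V"
  shows "mst_edges r par X \<subseteq> tree_edges V r par"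
proof
  fix ed
  assume "ed \<in> mst_edges r par X"
  then obtain x w n where "x \<in> X" "ed = (par w, w)" "w \<noteq> r" "(par ^^ n) x = w"
    unfolding mst_edges_def root_path_edges_def by blast
  moreover have "w \<in> V"
    using funpow_parent_in_tree[OF assms(1), of x n] assms(2) calculation by auto
  ultimately show "ed \<in> tree_edges V r par"
    unfolding tree_edges_def by blast
qed

lemma finite_mst_edges:
  assumes "rooted_tree V r par" "X \<subseteq> V"
  shows "finite (mst_edges r par X)"
  using mst_edges_subset_tree_edges[OF assms] finite_tree_edges[OF assms(1)]
  by (rule finite_subset)

lemma mst_edges_Un: "mst_edges r par (X \<union> Y) = mst_edges r par X \<union> mst_edges r par Y"
  unfolding mst_edges_def by blast

lemma mst_edges_mono: "X \<subseteq> Y \<Longrightarrow> mst_edges r par X \<subseteq> mst_edges r par Y"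
  unfolding mst_edges_def by blast

lemma mst_mono:
  assumes "rooted_tree V r par" "\<forall>ed\<in>tree_edges V r par. len ed \<ge> 0" "X \<subseteq> Y" "Y \<subseteq> V"
  shows "mst r par len X \<le> mst r par len Y"
  unfolding mst_def
proof (rule sum_mono2)
  show "finite (mst_edges r par Y)"
    using assms(1,4) by (rule finite_mst_edges)
  show "mst_edges r par X \<subseteq> mst_edges r par Y"
    using assms(3) by (rule mst_edges_mono)
  show "0 \<le> len ed" if "ed \<in> mst_edges r par Y - mst_edges r par X" for ed
    using assms(2) mst_edges_subset_tree_edges[OF assms(1,4)] that by blast
qed

lemma mst_nonneg:
  assumes "rooted_tree V r par" "\<forall>ed\<in>tree_edges V r par. len ed \<ge> 0" "X \<subseteq> V"
  shows "0 \<le> mst r par len X"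
  unfolding mst_def
  using assms(2) mst_edges_subset_tree_edges[OF assms(1,3)] by (intro sum_nonneg) blast

lemma mst_submodular:
  assumes "rooted_tree V r par" "\<forall>ed\<in>tree_edges V r par. len ed \<ge> 0" "X \<subseteq> V" "Y \<subseteq> V"
  shows "mst r par len (X \<union> Y) + mst r par len (X \<inter> Y) \<le> mst r par len X + mst r par len Y"
proof -
  let ?E = "mst_edges r par"
  have fin: "finite (?E X)" "finite (?E Y)"
    using finite_mst_edges[OF assms(1)] assms(3,4) by blast+
  have "sum len (?E (X \<inter> Y)) \<le> sum len (?E X \<inter> ?E Y)"
  proof (rule sum_mono2)
    show "?E (X \<inter> Y) \<subseteq> ?E X \<inter> ?E Y"
      by (simp add: mst_edges_mono)
    show "0 \<le> len ed" if "ed \<in> ?E X \<inter> ?E Y - ?E (X \<inter> Y)" for ed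
      using assms(2) mst_edges_subset_tree_edges[OF assms(1,3)] that by blast
  qed (use fin in blast)
  moreover have "sum len (?E X \<union> ?E Y) + sum len (?E X \<inter> ?E Y)
      = sum len (?E X) + sum len (?E Y)"
    using fin by (rule sum.union_inter)
  ultimately show ?thesis
    unfolding mst_def mst_edges_Un by linarith
qed

lemma mst_Un_le:
  assumes "rooted_tree V r par" "\<forall>ed\<in>tree_edges V r par. len ed \<ge> 0" "X \<subseteq> V" "Y \<subseteq> V"
  shows "mst r par len (X \<union> Y) \<le> mst r par len X + mst r par len Y"
proof -
  have "0 \<le> mst r par len (X \<inter> Y)"
    using assms(3) by (intro mst_nonneg[OF assms(1,2)]) blast
  then show ?thesis
    using mst_submodular[OF assms] by linarith
qed

lemma desc_el_subset: "desc_el V par e \<subseteq> V"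
  by (cases e) (auto simp: desc_def)

lemma mst_at_Un_le:
  assumes "rooted_tree V r par" "\<forall>ed\<in>tree_edges V r par. len ed \<ge> 0"
  shows "mst_at V r par len e (X \<union> Y) \<le> mst_at V r par len e X + mst_at V r par len e Y"
proof -
  let ?D = "desc_el V par e"
  have "?D \<inter> X \<subseteq> V" "?D \<inter> Y \<subseteq> V"
    using desc_el_subset[of V par e] by blast+
  then have "mst r par len ((?D \<inter> X) \<union> (?D \<inter> Y))
      \<le> mst r par len (?D \<inter> X) + mst r par len (?D \<inter> Y)"
    by (rule mst_Un_le[OF assms])
  then show ?thesis
    unfolding mst_at_def by (simp only: Int_Un_distrib)
qed

lemma mst_at_submodular:
  assumes "rooted_tree V r par" "\<forall>ed\<in>tree_edges V r par. len ed \<ge> 0"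
  shows "mst_at V r par len e Y + mst_at V r par len e (X \<union> Y \<union> Z)
           \<le> mst_at V r par len e (X \<union> Y) + mst_at V r par len e (Y \<union> Z)"
proof -
  let ?D = "desc_el V par e"
  let ?m = "mst r par len"
  have D: "?D \<inter> S \<subseteq> V" for S
    using desc_el_subset[of V par e] by blast
  have union: "?D \<inter> (X \<union> Y \<union> Z) = (?D \<inter> (X \<union> Y)) \<union> (?D \<inter> (Y \<union> Z))"
    by blast
  have "?m (?D \<inter> Y) \<le> ?m ((?D \<inter> (X \<union> Y)) \<inter> (?D \<inter> (Y \<union> Z)))"
    using D by (intro mst_mono[OF assms]) blast+
  then show ?thesis
    using mst_submodular[OF assms D[of "X \<union> Y"] D[of "Y \<union> Z"]]
    unfolding mst_at_def union by linarith
qed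

theorem lemma3p1:
  fixes V :: "'a set" and r :: 'a and par :: "'a \<Rightarrow> 'a" and len :: "'a \<times> 'a \<Rightarrow> real"
    and X1 X2 X3 X4 :: "'a set" and e :: "('a \<times> 'a) + 'a"
  assumes "rooted_tree V r par"
    and "\<forall>ed\<in>tree_edges V r par. len ed > 0"
    and "X1 \<subseteq> V" "X2 \<subseteq> V" "X3 \<subseteq> V" "X4 \<subseteq> V"
    and "e \<in> Inl ` tree_edges V r par \<union> Inr ` V"
  shows "(mst_at V r par len e (X1 \<union> X2) \<le> mst_at V r par len e X1 + mst_at V r par len e X2) \<and>
         (mst_at V r par len e X2 + mst_at V r par len e (X1 \<union> X2 \<union> X3)
           \<le> mst_at V r par len e (X1 \<union> X2) + mst_at V r par len e (X2 \<union> X3)) \<and>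
         (mst_at V r par len e (X1 \<union> X2 \<union> X3) + mst_at V r par len e (X2 \<union> X3 \<union> X4)
           \<le> mst_at V r par len e (X1 \<union> X2) + mst_at V r par len e (X2 \<union> X3)
              + mst_at V r par len e (X3 \<union> X4))"
proof -
  have nonneg: "\<forall>ed\<in>tree_edges V r par. len ed \<ge> 0"
    using assms(2) by (simp add: less_imp_le)
  let ?F = "mst_at V r par len e"
  note subadd = mst_at_Un_le[OF assms(1) nonneg, of e]
  note submod = mst_at_submodular[OF assms(1) nonneg, of e]
  have "?F X2 + ?F (X1 \<union> X2 \<union> X3) \<le> ?F (X1 \<union> X2) + ?F (X2 \<union> X3)"
    by (rule submod)
  moreover have "?F X3 + ?F (X2 \<union> X3 \<union> X4) \<le> ?F (X2 \<union> X3) + ?F (X3 \<union> X4)"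
    by (rule submod)
  moreover have "?F (X2 \<union> X3) \<le> ?F X2 + ?F X3"
    by (rule subadd)
  ultimately show ?thesis
    using subadd[of X1 X2] by linarith
qed

end
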